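(* Let $L$ be a positive integer and let $a_1\le\dots\le a_L$ and $b_1\le\dots\le b_L$ be numbers in $[0,1]$. Define $$\Phi(t)=\sum_{l=1}^L\mathbf{1}_{[0,b_l]}(t)+\sum_{l=1}^L\mathbf{1}_{[a_l,1]}(t),\qquad A_{\ge n}=\Phi^{-1}([n,2L])\quad(1\le n\le 2L).$$ Then: (i) each set $A_{\ge n}$ is a union of at most $L$ intervals, where intervals are understood cyclically, i.e. as arcs of $[0,1]$ with $0$ and $1$ identified; (ii) if for some $n$ the set $A_{\ge n}$ cannot be written as a union of fewer than $L$ such cyclic intervals, then the sequences interlace, i.e. either $a_1\le b_1\le a_2\le b_2\le\dots\le a_L\le b_L$ or $b_1\le a_1\le b_2\le a_2\le\dots\le b_L\le a_L$. *)

theory Defs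
  imports "HOL-Analysis.Analysis"
begin

text \<open>Cyclic interval (arc) of [0,1] with 0 and 1 identified: a subset of [0,1] that is
  either an ordinary interval, or a wrap-around arc, i.e. the union of an interval
  containing 0 and an interval containing 1.\<close>
definition cyclic_interval :: "real set \<Rightarrow> bool" where
  "cyclic_interval S \<longleftrightarrow> S \<subseteq> {0..1} \<and>
     (is_interval S \<or>
      (\<exists>I J. is_interval I \<and> is_interval J \<and> 0 \<in> I \<and> 1 \<in> J \<and> S = I \<union> J))"

definition union_of_cyclic_intervals :: "nat \<Rightarrow> real set \<Rightarrow> bool" where
  "union_of_cyclic_intervals k S \<longleftrightarrow>
     (\<exists>F. finite F \<and> card F \<le> k \<and> (\<forall>I\<in>F. cyclic_interval I) \<and> S = \<Union>F)"

definition Phi :: "nat \<Rightarrow> (nat \<Rightarrow> real) \<Rightarrow> (nat \<Rightarrow> real) \<Rightarrow> real \<Rightarrow> real" where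
  "Phi L a b t = (\<Sum>l=1..L. indicator {0..b l} t) + (\<Sum>l=1..L. indicator {a l..1} t)"

definition A_ge :: "nat \<Rightarrow> (nat \<Rightarrow> real) \<Rightarrow> (nat \<Rightarrow> real) \<Rightarrow> nat \<Rightarrow> real set" where
  "A_ge L a b n = {t \<in> {0..1}. real n \<le> Phi L a b t \<and> Phi L a b t \<le> real (2 * L)}"

definition interlace :: "nat \<Rightarrow> (nat \<Rightarrow> real) \<Rightarrow> (nat \<Rightarrow> real) \<Rightarrow> bool" where
  "interlace L a b \<longleftrightarrow>
     ((\<forall>l\<in>{1..L}. a l \<le> b l) \<and> (\<forall>l\<in>{1..<L}. b l \<le> a (Suc l))) \<or>
     ((\<forall>l\<in>{1..L}. b l \<le> a l) \<and> (\<forall>l\<in>{1..<L}. a l \<le> b (Suc l)))"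

end

theory Submission
  imports Defs
begin

text \<open>
  For t in [0,1] the value Phi t is the number of right endpoints b_l with t \<le> b_l plus the
  number of left endpoints a_l with a_l \<le> t.  Since both sequences are sorted, "at least j of
  the b_l lie above t" means t \<le> b_(L+1-j), and "at least i of the a_l lie below t" means
  a_i \<le> t.  Hence Phi t \<ge> n iff t lies in one of the closed intervals
  [a_i, b_(L+1-(n-i))] with max 0 (n-L) \<le> i \<le> min n L, where the index 0 stands for the
  endpoint 0 on the left and 1 on the right (the "level arcs" below).

  For n \<le> L these are n+1 intervals, and the two extreme ones [0,b_(L+1-n)] and [a_n,1] form a
  single wrap-around arc, leaving n cyclic intervals; for n > L there are 2L+1-n intervals.
  This gives part (i), and fewer than L intervals unless n = L or n = L+1.  For these two levels
  the arcs are [a_i, b_(i+1)] (plus the wrap arc [0,b_1] \<union> [a_L,1]) resp. [a_i, b_i]; if the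
  sequences do not interlace, one arc is empty or two neighbouring arcs overlap, so two of them
  merge into one cyclic interval and L-1 pieces suffice, which is part (ii).
\<close>

lemma mono_on_range:
  fixes c :: "nat \<Rightarrow> 'a::order"
  assumes step: "\<And>l. l \<in> {1..<L} \<Longrightarrow> c l \<le> c (Suc l)"
    and "1 \<le> l" "l \<le> m" "m \<le> L"
  shows "c l \<le> c m"
  using assms(3,4)
proof (induction m rule: dec_induct)
  case (step m)
  then have "c l \<le> c m" by simp
  also have "c m \<le> c (Suc m)" using step.prems step.hyps(1) \<open>1 \<le> l\<close> by (intro assms(1)) auto
  finally show ?case .
qed simp

text \<open>If P is closed downwards on {1..L}, the elements satisfying P form an initial segment
  {1..k}, so "at least i of them satisfy P" is the same as "P i".\<close>

lemma card_downward_closed: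
  assumes down: "\<And>l m. 1 \<le> l \<Longrightarrow> l \<le> m \<Longrightarrow> m \<le> L \<Longrightarrow> P m \<Longrightarrow> P l"
    and i: "1 \<le> i" "i \<le> L"
  shows "i \<le> card {l\<in>{1..L}. P l} \<longleftrightarrow> P i"
proof
  assume i_le: "i \<le> card {l\<in>{1..L}. P l}"
  show "P i"
  proof (rule ccontr)
    assume not_P: "\<not> P i"
    have "{l\<in>{1..L}. P l} \<subseteq> {1..<i}"
    proof
      fix l assume l: "l \<in> {l\<in>{1..L}. P l}"
      then have "\<not> i \<le> l" using down[of i l] i not_P by auto
      then show "l \<in> {1..<i}" using l by simp
    qed
    from card_mono[OF _ this] have "card {l\<in>{1..L}. P l} \<le> i - 1" by simp
    then show False using i_le i by linarith
  qed
next
  assume "P i"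
  then have "{1..i} \<subseteq> {l\<in>{1..L}. P l}" using down i by auto
  from card_mono[OF _ this] show "i \<le> card {l\<in>{1..L}. P l}" by simp
qed

text \<open>Dually, an upward closed P on {1..L} holds exactly on a final segment, and at least j
  elements satisfy P iff the j-th one from the top, L+1-j, does.\<close>

lemma card_upward_closed:
  assumes up: "\<And>l m. 1 \<le> l \<Longrightarrow> l \<le> m \<Longrightarrow> m \<le> L \<Longrightarrow> P l \<Longrightarrow> P m"
    and j: "1 \<le> j" "j \<le> L"
  shows "j \<le> card {l\<in>{1..L}. P l} \<longleftrightarrow> P (L + 1 - j)"
proof
  assume j_le: "j \<le> card {l\<in>{1..L}. P l}"
  show "P (L + 1 - j)"
  proof (rule ccontr)
    assume not_P: "\<not> P (L + 1 - j)"
    have "{l\<in>{1..L}. P l} \<subseteq> {L + 2 - j..L}"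
    proof
      fix l assume l: "l \<in> {l\<in>{1..L}. P l}"
      then have "\<not> l \<le> L + 1 - j" using up[of l "L + 1 - j"] not_P \<open>1 \<le> j\<close> by fastforce
      then show "l \<in> {L + 2 - j..L}" using l by simp
    qed
    from card_mono[OF _ this] have "card {l\<in>{1..L}. P l} \<le> j - 1" using j by simp
    then show False using j_le j by linarith
  qed
next
  assume "P (L + 1 - j)"
  then have "{L + 1 - j..L} \<subseteq> {l\<in>{1..L}. P l}" using j by (auto intro: up[of "L + 1 - j"])
  from card_mono[OF _ this] show "j \<le> card {l\<in>{1..L}. P l}" using j by simp
qed

lemma card_filter_le: "card {l\<in>{1..L}. P l} \<le> L"
  by (rule order_trans[OF card_mono[of "{1..L}"]]) auto

lemma cyclic_interval_closed:
  fixes x y :: real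
  assumes "0 \<le> x" "y \<le> 1"
  shows "cyclic_interval {x..y}"
  using assms unfolding cyclic_interval_def by (auto simp: is_interval_cc)

lemma cyclic_interval_wrap:
  fixes x y :: real
  assumes "0 \<le> x" "x \<le> 1" "0 \<le> y" "y \<le> 1"
  shows "cyclic_interval ({0..x} \<union> {y..1})"
  unfolding cyclic_interval_def
  using assms by (intro conjI disjI2 exI[of _ "{0..x}"] exI[of _ "{y..1}"]) (auto simp: is_interval_cc)

lemma overlapping_intervals_union:
  fixes x y u v :: real
  assumes "x \<le> u" "u \<le> y" "y \<le> v"
  shows "{x..y} \<union> {u..v} = {x..v}"
  using assms by auto

lemma union_of_cyclic_intervals_mono:
  assumes "union_of_cyclic_intervals k S" "k \<le> k'"
  shows "union_of_cyclic_intervals k' S"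
  using assms unfolding union_of_cyclic_intervals_def by auto

lemma union_of_cyclic_intervals_family:
  assumes "finite K" "\<forall>i\<in>K. cyclic_interval (X i)" "card K \<le> k" "S = (\<Union>i\<in>K. X i)"
  shows "union_of_cyclic_intervals k S"
  unfolding union_of_cyclic_intervals_def
  using assms card_image_le[OF assms(1), of X] by (intro exI[of _ "X ` K"]) auto

lemma union_of_cyclic_intervals_merge:
  assumes K: "finite K" "p \<in> K" "q \<in> K" "p \<noteq> q" "card K \<le> k + 1"
    and cyclic: "\<forall>i\<in>K - {p, q}. cyclic_interval (X i)" "cyclic_interval (X p \<union> X q)"
    and S: "S = (\<Union>i\<in>K. X i)"
  shows "union_of_cyclic_intervals k S"
proof -
  define Y where "Y = (\<lambda>i. if i = p then X p \<union> X q else X i)"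
  have "card (K - {q}) \<le> k" using K by simp
  moreover have "\<forall>i\<in>K - {q}. cyclic_interval (Y i)" using cyclic by (auto simp: Y_def)
  moreover have "S = (\<Union>i\<in>K - {q}. Y i)" using S K by (auto simp: Y_def)
  ultimately show ?thesis using K(1) by (intro union_of_cyclic_intervals_family) auto
qed

text \<open>The i-th smallest left endpoint a_i, with the convention that there is a 0-th one at 0;
  t \<ge> left_end a i says that at least i of the sets [a_l,1] contain t.\<close>

definition left_end :: "(nat \<Rightarrow> real) \<Rightarrow> nat \<Rightarrow> real" where
  "left_end a i = (if i = 0 then 0 else a i)"

text \<open>The j-th largest right endpoint b_(L+1-j), with a 0-th one at 1;
  t \<le> right_end L b j says that at least j of the sets [0,b_l] contain t.\<close>

definition right_end :: "nat \<Rightarrow> (nat \<Rightarrow> real) \<Rightarrow> nat \<Rightarrow> real" where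
  "right_end L b j = (if j = 0 then 1 else b (L + 1 - j))"

text \<open>The points covered by at least i left sets [a_l,1] and at least n-i right sets [0,b_l];
  the level set A_ge n is the union of these closed intervals.\<close>

definition level_arc :: "nat \<Rightarrow> (nat \<Rightarrow> real) \<Rightarrow> (nat \<Rightarrow> real) \<Rightarrow> nat \<Rightarrow> nat \<Rightarrow> real set" where
  "level_arc L a b n i = {left_end a i..right_end L b (n - i)}"

text \<open>For 1 \<le> n \<le> L the two extreme level arcs [0,b_(L+1-n)] and [a_n,1] are combined into
  one wrap-around arc, indexed by n; the indices 1..n-1 keep their level arcs.\<close>

definition wrapped_arc :: "nat \<Rightarrow> (nat \<Rightarrow> real) \<Rightarrow> (nat \<Rightarrow> real) \<Rightarrow> nat \<Rightarrow> nat \<Rightarrow> real set" where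
  "wrapped_arc L a b n i =
     (if i = n then level_arc L a b n 0 \<union> level_arc L a b n n else level_arc L a b n i)"

lemma wrapped_arc_level_L:
  "i \<in> {1..<L} \<Longrightarrow> wrapped_arc L a b L i = {a i..b (Suc i)}"
  "1 \<le> L \<Longrightarrow> wrapped_arc L a b L L = {0..b 1} \<union> {a L..1}"
  by (simp_all add: wrapped_arc_def level_arc_def left_end_def right_end_def Suc_diff_Suc)

lemma level_arc_Suc_L: "i \<in> {1..L} \<Longrightarrow> level_arc L a b (Suc L) i = {a i..b i}"
  by (simp add: level_arc_def left_end_def right_end_def)

locale sorted_endpoints =
  fixes L :: nat and a b :: "nat \<Rightarrow> real"
  assumes a_range: "\<And>l. l \<in> {1..L} \<Longrightarrow> 0 \<le> a l \<and> a l \<le> 1"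
    and b_range: "\<And>l. l \<in> {1..L} \<Longrightarrow> 0 \<le> b l \<and> b l \<le> 1"
    and a_mono: "\<And>l. l \<in> {1..<L} \<Longrightarrow> a l \<le> a (Suc l)"
    and b_mono: "\<And>l. l \<in> {1..<L} \<Longrightarrow> b l \<le> b (Suc l)"
begin

lemma a_le: "1 \<le> l \<Longrightarrow> l \<le> m \<Longrightarrow> m \<le> L \<Longrightarrow> a l \<le> a m"
  by (rule mono_on_range[where c=a, OF a_mono])

lemma b_le: "1 \<le> l \<Longrightarrow> l \<le> m \<Longrightarrow> m \<le> L \<Longrightarrow> b l \<le> b m"
  by (rule mono_on_range[where c=b, OF b_mono])

lemma left_count:
  assumes "0 \<le> t" "i \<le> L"
  shows "i \<le> card {l\<in>{1..L}. a l \<le> t} \<longleftrightarrow> left_end a i \<le> t"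
proof (cases "i = 0")
  case False
  have "a l \<le> t" if "1 \<le> l" "l \<le> m" "m \<le> L" "a m \<le> t" for l m
    using a_le[OF that(1-3)] that(4) by linarith
  then show ?thesis using card_downward_closed[of L "\<lambda>l. a l \<le> t" i] False assms(2)
    by (simp add: left_end_def)
qed (use assms in \<open>simp add: left_end_def\<close>)

lemma right_count:
  assumes "t \<le> 1" "j \<le> L"
  shows "j \<le> card {l\<in>{1..L}. t \<le> b l} \<longleftrightarrow> t \<le> right_end L b j"
proof (cases "j = 0")
  case False
  have "t \<le> b m" if "1 \<le> l" "l \<le> m" "m \<le> L" "t \<le> b l" for l m
    using b_le[OF that(1-3)] that(4) by linarith
  then show ?thesis using card_upward_closed[of L "\<lambda>l. t \<le> b l" j] False assms(2)
    by (simp add: right_end_def)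
qed (use assms in \<open>simp add: right_end_def\<close>)

text \<open>Phi counts the right and left sets containing t; this sum never exceeds 2L, so the upper
  bound in the definition of A_ge is automatic.\<close>

lemma A_ge_iff_counts:
  "t \<in> A_ge L a b n \<longleftrightarrow>
     t \<in> {0..1} \<and> n \<le> card {l\<in>{1..L}. t \<le> b l} + card {l\<in>{1..L}. a l \<le> t}"
proof (cases "t \<in> {0..1}")
  case True
  have "{l\<in>{1..L}. t \<in> {0..b l}} = {l\<in>{1..L}. t \<le> b l}"
    and "{l\<in>{1..L}. t \<in> {a l..1}} = {l\<in>{1..L}. a l \<le> t}" using True by auto
  then have "Phi L a b t = real (card {l\<in>{1..L}. t \<le> b l}) + real (card {l\<in>{1..L}. a l \<le> t})"
    by (simp add: Phi_def indicator_def Int_def conj_commute)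
  moreover have "card {l\<in>{1..L}. t \<le> b l} + card {l\<in>{1..L}. a l \<le> t} \<le> 2 * L"
    using card_filter_le[of L] by (simp add: add_mono mult_2)
  ultimately show ?thesis using True unfolding A_ge_def by (simp flip: of_nat_add)
qed (auto simp: A_ge_def)

lemma left_end_range: "i \<le> L \<Longrightarrow> 0 \<le> left_end a i \<and> left_end a i \<le> 1"
  using a_range[of i] by (simp add: left_end_def)

lemma right_end_range:
  assumes "j \<le> L"
  shows "0 \<le> right_end L b j \<and> right_end L b j \<le> 1"
proof (cases "j = 0")
  case False
  then have "L + 1 - j \<in> {1..L}" using assms by auto
  then show ?thesis using b_range False by (simp add: right_end_def)
qed (simp add: right_end_def)

text \<open>A point with ca left and cb right sets has Phi \<ge> n iff some split i + (n-i) with i \<le> ca and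
  n-i \<le> cb exists; take i = min ca n.\<close>

lemma A_ge_Union_arcs: "A_ge L a b n = (\<Union>i\<in>{n - L..min n L}. level_arc L a b n i)"
proof (rule set_eqI)
  fix t
  define cb where "cb = card {l\<in>{1..L}. t \<le> b l}"
  define ca where "ca = card {l\<in>{1..L}. a l \<le> t}"
  have "t \<in> A_ge L a b n \<longleftrightarrow> t \<in> {0..1} \<and> n \<le> cb + ca"
    unfolding cb_def ca_def by (rule A_ge_iff_counts)
  also have "\<dots> \<longleftrightarrow> (\<exists>i\<in>{n - L..min n L}. t \<in> level_arc L a b n i)"
  proof
    assume t: "t \<in> {0..1} \<and> n \<le> cb + ca"
    define i where "i = min ca n"
    have "ca \<le> L" "cb \<le> L" unfolding ca_def cb_def by (rule card_filter_le)+
    then have i: "i \<in> {n - L..min n L}" "i \<le> ca" "n - i \<le> cb" using t by (auto simp: i_def)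
    then have "left_end a i \<le> t" "t \<le> right_end L b (n - i)"
      using left_count[of t i] right_count[of t "n - i"] t \<open>cb \<le> L\<close> unfolding ca_def cb_def by auto
    then show "\<exists>i\<in>{n - L..min n L}. t \<in> level_arc L a b n i" using i by (auto simp: level_arc_def)
  next
    assume "\<exists>i\<in>{n - L..min n L}. t \<in> level_arc L a b n i"
    then obtain i where i: "i \<in> {n - L..min n L}" and t: "left_end a i \<le> t" "t \<le> right_end L b (n - i)"
      by (auto simp: level_arc_def)
    have "i \<le> L" "n - i \<le> L" using i by auto
    then have "t \<in> {0..1}" using t left_end_range[of i] right_end_range[of "n - i"] by auto
    moreover have "i \<le> ca" "n - i \<le> cb"
      using left_count[of t i] right_count[of t "n - i"] t \<open>i \<le> L\<close> \<open>n - i \<le> L\<close> \<open>t \<in> {0..1}\<close>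
      unfolding ca_def cb_def by auto
    ultimately show "t \<in> {0..1} \<and> n \<le> cb + ca" by auto
  qed
  finally show "t \<in> A_ge L a b n \<longleftrightarrow> t \<in> (\<Union>i\<in>{n - L..min n L}. level_arc L a b n i)" by blast
qed

lemma level_arc_cyclic:
  assumes "i \<in> {n - L..min n L}"
  shows "cyclic_interval (level_arc L a b n i)"
  using assms left_end_range[of i] right_end_range[of "n - i"]
  unfolding level_arc_def by (intro cyclic_interval_closed) auto

lemma wrapped_arc_cyclic:
  assumes "1 \<le> n" "n \<le> L" "i \<in> {1..n}"
  shows "cyclic_interval (wrapped_arc L a b n i)"
proof (cases "i = n")
  case True
  have "wrapped_arc L a b n i = {0..right_end L b n} \<union> {left_end a n..1}"
    using True by (simp add: wrapped_arc_def level_arc_def left_end_def right_end_def)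
  then show ?thesis
    using assms left_end_range[of n] right_end_range[of n] by (simp add: cyclic_interval_wrap)
next
  case False
  then show ?thesis using assms level_arc_cyclic[of i n] by (simp add: wrapped_arc_def)
qed

lemma A_ge_Union_wrapped:
  assumes "1 \<le> n" "n \<le> L"
  shows "A_ge L a b n = (\<Union>i\<in>{1..n}. wrapped_arc L a b n i)"
proof -
  have idx: "{n - L..min n L} = insert 0 (insert n {1..<n})" "{1..n} = insert n {1..<n}"
    using assms by auto
  have "(\<Union>i\<in>{1..<n}. wrapped_arc L a b n i) = (\<Union>i\<in>{1..<n}. level_arc L a b n i)"
    by (rule SUP_cong) (auto simp: wrapped_arc_def)
  then show ?thesis unfolding A_ge_Union_arcs idx UN_insert by (simp add: wrapped_arc_def Un_assoc)
qed

lemma A_ge_cover_low: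
  assumes "1 \<le> n" "n \<le> L"
  shows "union_of_cyclic_intervals n (A_ge L a b n)"
  using assms wrapped_arc_cyclic A_ge_Union_wrapped
  by (intro union_of_cyclic_intervals_family[where K="{1..n}"]) auto

lemma A_ge_cover_high:
  assumes "L < n"
  shows "union_of_cyclic_intervals (2 * L + 1 - n) (A_ge L a b n)"
proof -
  have K: "{n - L..min n L} = {n - L..L}" using assms by simp
  have "\<forall>i\<in>{n - L..L}. cyclic_interval (level_arc L a b n i)"
    using level_arc_cyclic[of _ n] unfolding K by blast
  then show ?thesis using A_ge_Union_arcs[of n] unfolding K
    by (intro union_of_cyclic_intervals_family[where K="{n - L..L}"]) auto
qed

text \<open>At level L, an overlap a_l < b_l lets two consecutive wrapped arcs merge: the arcs around
  b_l, namely [a_(l-1), b_l] and [a_l, b_(l+1)] (read cyclically at l = 1 and l = L), overlap.\<close>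

lemma wrapped_arcs_overlap_merge:
  assumes L2: "2 \<le> L" and l: "l \<in> {1..L}" "a l < b l"
  shows "\<exists>p\<in>{1..L}. \<exists>q\<in>{1..L}. p \<noteq> q \<and>
           cyclic_interval (wrapped_arc L a b L p \<union> wrapped_arc L a b L q)"
proof -
  let ?W = "wrapped_arc L a b L"
  have W_mid: "?W i = {a i..b (Suc i)}" if "i \<in> {1..<L}" for i
    using that by (rule wrapped_arc_level_L)
  have W_last: "?W L = {0..b 1} \<union> {a L..1}" using L2 by (simp add: wrapped_arc_level_L)
  have in_unit: "0 \<le> a i" "a i \<le> 1" "0 \<le> b i" "b i \<le> 1" if "i \<in> {1..L}" for i
    using a_range[OF that] b_range[OF that] by auto
  consider "l = 1" | "l = L" | "1 < l" "l < L" using l L2 by fastforce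
  then show ?thesis
  proof cases
    case 1
    have "{0..b 1} \<union> {a 1..b 2} = {0..b 2}"
      using l 1 L2 in_unit[of 1] b_le[of 1 2] by (intro overlapping_intervals_union) auto
    then have "?W 1 \<union> ?W L = {0..b 2} \<union> {a L..1}"
      using W_mid[of 1] W_last L2 by (auto simp: numeral_2_eq_2)
    moreover have "cyclic_interval ({0..b 2} \<union> {a L..1})"
      using L2 in_unit[of 2] in_unit[of L] by (intro cyclic_interval_wrap) auto
    ultimately show ?thesis using L2 by (intro bexI[of _ 1] bexI[of _ L]) auto
  next
    case 2
    have "{a (L - 1)..b L} \<union> {a L..1} = {a (L - 1)..1}"
      using l 2 L2 in_unit[of L] a_le[of "L - 1" L] by (intro overlapping_intervals_union) auto
    then have "?W (L - 1) \<union> ?W L = {0..b 1} \<union> {a (L - 1)..1}"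
      using W_mid[of "L - 1"] W_last L2 by auto
    moreover have "cyclic_interval ({0..b 1} \<union> {a (L - 1)..1})"
      using L2 in_unit[of 1] in_unit[of "L - 1"] by (intro cyclic_interval_wrap) auto
    ultimately show ?thesis using L2 by (intro bexI[of _ "L - 1"] bexI[of _ L]) auto
  next
    case 3
    have idx: "l - 1 \<in> {1..<L}" "Suc (l - 1) = l" "Suc l \<in> {1..L}" using 3 by auto
    have "{a (l - 1)..b l} \<union> {a l..b (Suc l)} = {a (l - 1)..b (Suc l)}"
      using l 3 a_le[of "l - 1" l] b_le[of l "Suc l"] by (intro overlapping_intervals_union) auto
    then have "?W (l - 1) \<union> ?W l = {a (l - 1)..b (Suc l)}"
      using W_mid[OF idx(1)] W_mid[of l] idx(2) 3 by simp
    moreover have "cyclic_interval {a (l - 1)..b (Suc l)}"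
      using idx in_unit[of "l - 1"] in_unit[of "Suc l"] by (intro cyclic_interval_closed) auto
    ultimately show ?thesis using idx 3 by (intro bexI[of _ "l - 1"] bexI[of _ l]) auto
  qed
qed

text \<open>Part (ii) at level L: failure of the interlacing b_1 \<le> a_1 \<le> b_2 \<le> ... gives either an
  empty arc [a_l, b_(l+1)] or an overlap a_l < b_l; either way two wrapped arcs merge.\<close>

lemma A_ge_L_fewer:
  assumes L2: "2 \<le> L"
    and not_interlaced: "\<not> ((\<forall>l\<in>{1..L}. b l \<le> a l) \<and> (\<forall>l\<in>{1..<L}. a l \<le> b (Suc l)))"
  shows "union_of_cyclic_intervals (L - 1) (A_ge L a b L)"
proof -
  let ?W = "wrapped_arc L a b L"
  have "\<exists>p\<in>{1..L}. \<exists>q\<in>{1..L}. p \<noteq> q \<and> cyclic_interval (?W p \<union> ?W q)"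
  proof -
    from not_interlaced consider (gap) l where "l \<in> {1..<L}" "b (Suc l) < a l"
      | (overlap) l where "l \<in> {1..L}" "a l < b l"
      by (auto simp: not_le)
    then show ?thesis
    proof cases
      case gap
      then have "?W l \<union> ?W L = ?W L" using wrapped_arc_level_L(1)[of l] by auto
      then show ?thesis using gap wrapped_arc_cyclic[of L L] L2 by (intro bexI[of _ l] bexI[of _ L]) auto
    qed (use wrapped_arcs_overlap_merge L2 in blast)
  qed
  then obtain p q where "p \<in> {1..L}" "q \<in> {1..L}" "p \<noteq> q" "cyclic_interval (?W p \<union> ?W q)"
    by blast
  then show ?thesis using L2 wrapped_arc_cyclic[of L] A_ge_Union_wrapped[of L]
    by (intro union_of_cyclic_intervals_merge[where K="{1..L}" and X="?W"]) auto
qed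

text \<open>Part (ii) at level L+1: failure of a_1 \<le> b_1 \<le> a_2 \<le> ... gives either an empty arc
  [a_l, b_l] or two overlapping consecutive arcs [a_l, b_l], [a_(l+1), b_(l+1)].\<close>

lemma A_ge_Suc_L_fewer:
  assumes L2: "2 \<le> L"
    and not_interlaced: "\<not> ((\<forall>l\<in>{1..L}. a l \<le> b l) \<and> (\<forall>l\<in>{1..<L}. b l \<le> a (Suc l)))"
  shows "union_of_cyclic_intervals (L - 1) (A_ge L a b (Suc L))"
proof -
  let ?Z = "level_arc L a b (Suc L)"
  have Z_cyclic: "\<forall>i\<in>{1..L}. cyclic_interval (?Z i)"
    using level_arc_cyclic[of _ "Suc L"] by simp
  have merge: "union_of_cyclic_intervals (L - 1) (A_ge L a b (Suc L))"
    if "p \<in> {1..L}" "q \<in> {1..L}" "p \<noteq> q" "cyclic_interval (?Z p \<union> ?Z q)" for p q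
    using that L2 Z_cyclic A_ge_Union_arcs[of "Suc L"]
    by (intro union_of_cyclic_intervals_merge[where K="{1..L}" and X="?Z"]) auto
  from not_interlaced consider (empty) l where "l \<in> {1..L}" "b l < a l"
    | (overlap) l where "l \<in> {1..<L}" "a (Suc l) < b l"
    by (auto simp: not_le)
  then show ?thesis
  proof cases
    case empty
    define q :: nat where "q = (if l = 1 then 2 else 1)"
    have q: "q \<in> {1..L}" "q \<noteq> l" using L2 empty by (auto simp: q_def)
    have "?Z l \<union> ?Z q = ?Z q" using level_arc_Suc_L[of l] empty by auto
    then show ?thesis using merge[of l q] empty q Z_cyclic by auto
  next
    case overlap
    have "{a l..b l} \<union> {a (Suc l)..b (Suc l)} = {a l..b (Suc l)}"
      using overlap a_le[of l "Suc l"] b_le[of l "Suc l"] by (intro overlapping_intervals_union) auto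
    then have "?Z l \<union> ?Z (Suc l) = {a l..b (Suc l)}"
      using level_arc_Suc_L[of l] level_arc_Suc_L[of "Suc l"] overlap by auto
    moreover have "cyclic_interval {a l..b (Suc l)}"
      using overlap a_range[of l] b_range[of "Suc l"] by (intro cyclic_interval_closed) auto
    ultimately show ?thesis using merge[of l "Suc l"] overlap by auto
  qed
qed

end

text \<open>For part (ii), L = 1 always interlaces;
  for L \<ge> 2 every level other than L and L+1 needs at most L-1 arcs anyway, and the two
  remaining levels are handled by the merging lemmas.\<close>

theorem mainTheorem6:
  fixes L :: nat and a b :: "nat \<Rightarrow> real"
  assumes "L \<ge> 1"
    and "\<And>l. l \<in> {1..L} \<Longrightarrow> 0 \<le> a l \<and> a l \<le> 1"
    and "\<And>l. l \<in> {1..L} \<Longrightarrow> 0 \<le> b l \<and> b l \<le> 1"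
    and "\<And>l. l \<in> {1..<L} \<Longrightarrow> a l \<le> a (Suc l)"
    and "\<And>l. l \<in> {1..<L} \<Longrightarrow> b l \<le> b (Suc l)"
  shows "(\<forall>n\<in>{1..2*L}. union_of_cyclic_intervals L (A_ge L a b n))
       \<and> ((\<exists>n\<in>{1..2*L}. \<not> union_of_cyclic_intervals (L - 1) (A_ge L a b n))
            \<longrightarrow> interlace L a b)"
proof -
  interpret sorted_endpoints L a b using assms(2-5) by unfold_locales
  have low: "union_of_cyclic_intervals k (A_ge L a b n)" if "1 \<le> n" "n \<le> L" "n \<le> k" for n k
    using union_of_cyclic_intervals_mono[OF A_ge_cover_low that(3)] that(1,2) .
  have high: "union_of_cyclic_intervals k (A_ge L a b n)" if "L < n" "2 * L + 1 - n \<le> k" for n k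
    using union_of_cyclic_intervals_mono[OF A_ge_cover_high that(2)] that(1) .
  have cover: "union_of_cyclic_intervals L (A_ge L a b n)" if "n \<in> {1..2 * L}" for n
    using that low[of n L] high[of n L] by (cases "n \<le> L") auto
  have fewer: "union_of_cyclic_intervals (L - 1) (A_ge L a b n)"
    if not_interlaced: "\<not> interlace L a b" and "n \<in> {1..2 * L}" for n
  proof -
    have L2: "2 \<le> L" using not_interlaced assms(1) by (cases "L = 1") (auto simp: interlace_def)
    consider "n = L" | "n = Suc L" | "n \<noteq> L" "n \<noteq> Suc L" by blast
    then show ?thesis
    proof cases
      case 1 then show ?thesis using A_ge_L_fewer L2 not_interlaced by (simp add: interlace_def)
    next
      case 2 then show ?thesis using A_ge_Suc_L_fewer L2 not_interlaced by (simp add: interlace_def)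
    next
      case 3 then show ?thesis using low[of n "L - 1"] high[of n "L - 1"] \<open>n \<in> {1..2 * L}\<close>
        by (cases "n \<le> L") auto
    qed
  qed
  show ?thesis using cover fewer by blast
qed

end
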